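(* Let $a\neq 0$ be real and consider the characteristic equation $$\lambda^{2}-\varepsilon\lambda-\varepsilon a e^{-\lambda\tau}+1=0.$$ For $\varepsilon>0$ satisfying $$0<\varepsilon<\sqrt{2},\qquad \varepsilon|a|<1,\qquad \varepsilon^{2}+4a^{2}>4,\tag{H0}$$ define $$\omega_{1,2}=\omega_{1,2}(\varepsilon)=\frac{1}{\sqrt{2}}\Big(2-\varepsilon^{2}\pm\varepsilon\sqrt{\varepsilon^{2}-4+4a^{2}}\Big)^{1/2}\quad(\omega_1>\omega_2>0),$$ and, for $j=0,1,2,\dots$, $$\tau_{1,2}^{j}=\begin{cases}\dfrac{1}{\omega_{1,2}}\Big(\arccos\big(\tfrac{1-\omega_{1,2}^{2}}{\varepsilon a}\big)+2j\pi\Big), & a>0,\\[2mm] \dfrac{1}{\omega_{1,2}}\Big(2\pi-\arccos\big(\tfrac{1-\omega_{1,2}^{2}}{\varepsilon a}\big)+2j\pi\Big), & a<0.\end{cases}$$ Suppose there is $\varepsilon_0$ satisfying (H0) such that, with these quantities computed at $\varepsilon=\varepsilon_0$, $\tau_{1}^{m}=\tau_{2}^{n}=:\tau_0$ for some $m,n\in\mathbb{N}$. Then at $(\varepsilon,\tau)=(\varepsilon_0,\tau_0)$ the characteristic equation has two pairs of simple purely imaginary roots $\pm i\omega_1$ and $\pm i\omega_2$.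
   Context: This is the characteristic equation at the equilibrium $x=0$ of the delayed van der Pol oscillator $\ddot{x}(t)+\varepsilon(x^{2}(t)-1)\dot{x}(t)+x(t)=\varepsilon f(x(t-\tau))$, where $\varepsilon>0$, $\tau>0$, and $f$ is smooth near $0$ with $f(0)=f''(0)=0$, $f'(0)=a\neq0$. *)

theory Defs
  imports "HOL-Analysis.Analysis"
begin

definition char_fun :: "real \<Rightarrow> real \<Rightarrow> real \<Rightarrow> complex \<Rightarrow> complex" where
  "char_fun eps a tau z = z^2 - of_real eps * z - of_real (eps * a) * exp (- z * of_real tau) + 1"

definition H0 :: "real \<Rightarrow> real \<Rightarrow> bool" where
  "H0 eps a \<longleftrightarrow> 0 < eps \<and> eps < sqrt 2 \<and> eps * \<bar>a\<bar> < 1 \<and> eps^2 + 4 * a^2 > 4"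

definition omega1 :: "real \<Rightarrow> real \<Rightarrow> real" where
  "omega1 eps a = (1 / sqrt 2) * sqrt (2 - eps^2 + eps * sqrt (eps^2 - 4 + 4 * a^2))"

definition omega2 :: "real \<Rightarrow> real \<Rightarrow> real" where
  "omega2 eps a = (1 / sqrt 2) * sqrt (2 - eps^2 - eps * sqrt (eps^2 - 4 + 4 * a^2))"

definition tau_crit :: "real \<Rightarrow> real \<Rightarrow> real \<Rightarrow> nat \<Rightarrow> real" where
  "tau_crit eps a w j =
     (if a > 0 then (1 / w) * (arccos ((1 - w^2) / (eps * a)) + 2 * real j * pi)
      else (1 / w) * (2 * pi - arccos ((1 - w^2) / (eps * a)) + 2 * real j * pi))"

definition simple_root :: "(complex \<Rightarrow> complex) \<Rightarrow> complex \<Rightarrow> bool" where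
  "simple_root f z \<longleftrightarrow> f z = 0 \<and> deriv f z \<noteq> 0"

end

theory Submission
  imports Defs
begin

text \<open>Separating real and imaginary parts, \<open>\<pm>i w\<close> is a root iff
  \<open>\<epsilon> a cos (w \<tau>) = 1 - w\<^sup>2\<close> and \<open>a sin (w \<tau>) = w\<close>. Eliminating \<open>\<tau>\<close> gives the frequency
  equation \<open>(1 - w\<^sup>2)\<^sup>2 + \<epsilon>\<^sup>2 w\<^sup>2 = \<epsilon>\<^sup>2 a\<^sup>2\<close>, a quadratic in \<open>w\<^sup>2\<close> with roots
  \<open>\<omega>\<^sub>1\<^sup>2, \<omega>\<^sub>2\<^sup>2\<close>; (H0) makes its discriminant positive and both roots positive.
  For a solution \<open>w\<close> of the frequency equation, the delays \<open>\<tau>\<^sup>j\<close> are exactly the ones giving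
  the phase \<open>w \<tau>\<close> the required cosine and sine. A root \<open>i w\<close> could only be double if
  \<open>\<epsilon> \<tau> = 2\<close> and \<open>\<tau> (1 - w\<^sup>2) = \<epsilon>\<close>, i.e. if \<open>w\<^sup>2\<close> were the midpoint \<open>(2 - \<epsilon>\<^sup>2)/2\<close>
  of the two roots, which a positive discriminant excludes.\<close>

lemma tau_crit_phase:
  fixes e a w :: real and k :: nat
  assumes "e \<noteq> 0" "a \<noteq> 0" "w > 0"
    and freq: "(1 - w^2)^2 + e^2 * w^2 = e^2 * a^2"
  shows "e * a * cos (w * tau_crit e a w k) = 1 - w^2 \<and> a * sin (w * tau_crit e a w k) = w"
proof -
  define c where "c = (1 - w^2) / (e * a)"
  have "c^2 = (e^2 * a^2 - e^2 * w^2) / (e^2 * a^2)"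
    using freq by (simp add: c_def power_divide power_mult_distrib)
  also have "\<dots> = 1 - (w / a)^2"
    using assms(1,2) by (simp add: field_simps power_divide)
  finally have c2: "1 - c^2 = (w / a)^2" by simp
  then have "\<bar>c\<bar> \<le> 1"
    by (metis abs_square_le_1 diff_ge_0_iff_ge zero_le_power2)
  then have c_range: "-1 \<le> c" "c \<le> 1" by auto
  obtain N :: nat where phase: "w * tau_crit e a w k = sgn a * arccos c + 2 * real N * pi"
  proof (cases "a > 0")
    case True
    then show ?thesis
      using that[of k] \<open>w > 0\<close> by (simp add: tau_crit_def c_def)
  next
    case False
    then have "sgn a = -1" using \<open>a \<noteq> 0\<close> by simp
    then show ?thesis
      using that[of "Suc k"] False \<open>w > 0\<close> by (simp add: tau_crit_def c_def algebra_simps)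
  qed
  have sgn_a: "sgn a = 1 \<or> sgn a = -1" using \<open>a \<noteq> 0\<close> by (simp add: sgn_if)
  have "cos (w * tau_crit e a w k) = c"
    using sgn_a c_range by (auto simp: phase cos_add)
  moreover have "sin (w * tau_crit e a w k) = sgn a * \<bar>w / a\<bar>"
    using sgn_a c_range c2 by (auto simp: phase sin_add sin_arccos)
  ultimately show ?thesis
    using assms(1-3) by (auto simp: c_def sgn_if)
qed

lemma deriv_char_fun:
  "deriv (char_fun e a tau) z =
     2 * z - of_real e + of_real (e * a) * of_real tau * exp (- z * of_real tau)"
  unfolding char_fun_def
  by (rule DERIV_imp_deriv) (auto intro!: derivative_eq_intros simp: algebra_simps)

lemma char_fun_imaginary_root:
  assumes "e * a * cos (w * tau) = 1 - w^2" "a * sin (w * tau) = w"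
  shows "char_fun e a tau (\<i> * of_real w) = 0"
proof -
  have "e * a * sin (w * tau) = e * w" using assms(2) by (simp add: mult.assoc)
  with assms(1) show ?thesis
    by (simp add: char_fun_def complex_eq_iff Re_exp Im_exp power2_eq_square algebra_simps)
qed

lemma deriv_char_fun_imaginary_nonzero:
  assumes phase: "e * a * cos (w * tau) = 1 - w^2" "a * sin (w * tau) = w"
    and "w \<noteq> 0" "e^2 \<noteq> 2 * (1 - w^2)"
  shows "deriv (char_fun e a tau) (\<i> * of_real w) \<noteq> 0"
proof
  assume zero: "deriv (char_fun e a tau) (\<i> * of_real w) = 0"
  have "Re (deriv (char_fun e a tau) (\<i> * of_real w)) = tau * (e * a * cos (w * tau)) - e"
    by (simp add: deriv_char_fun Re_exp Im_exp algebra_simps)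
  with zero phase(1) have re: "tau * (1 - w^2) = e" by simp
  have "Im (deriv (char_fun e a tau) (\<i> * of_real w)) = 2 * w - e * tau * (a * sin (w * tau))"
    by (simp add: deriv_char_fun Re_exp Im_exp algebra_simps)
  with zero phase(2) have "w * (2 - e * tau) = 0" by (simp add: algebra_simps)
  with \<open>w \<noteq> 0\<close> have "e * tau = 2" by simp
  with re have "e^2 = 2 * (1 - w^2)"
    by (metis mult.assoc mult.commute power2_eq_square)
  with assms(4) show False ..
qed

lemma simple_root_imaginary_pair:
  assumes "e * a * cos (w * tau) = 1 - w^2" "a * sin (w * tau) = w"
    and "w \<noteq> 0" "e^2 \<noteq> 2 * (1 - w^2)"
  shows "simple_root (char_fun e a tau) (\<i> * of_real w) \<and>
         simple_root (char_fun e a tau) (- \<i> * of_real w)"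
proof -
  have "simple_root (char_fun e a tau) (\<i> * of_real v)"
    if "e * a * cos (v * tau) = 1 - v^2" "a * sin (v * tau) = v" "v \<noteq> 0" "e^2 \<noteq> 2 * (1 - v^2)"
    for v
    using that char_fun_imaginary_root deriv_char_fun_imaginary_nonzero
    by (simp add: simple_root_def)
  from this[of w] this[of "- w"] assms show ?thesis by simp
qed

lemma critical_delay_simple_roots:
  fixes e a w :: real and k :: nat
  assumes "e \<noteq> 0" "a \<noteq> 0" "w > 0"
    and "(1 - w^2)^2 + e^2 * w^2 = e^2 * a^2" "e^2 \<noteq> 2 * (1 - w^2)"
  shows "simple_root (char_fun e a (tau_crit e a w k)) (\<i> * of_real w) \<and>
         simple_root (char_fun e a (tau_crit e a w k)) (- \<i> * of_real w)"
  using simple_root_imaginary_pair tau_crit_phase[OF assms(1-4)] assms(3,5) by simp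

lemma frequency_equation_iff:
  fixes e a x :: real
  shows "(1 - x)^2 + e^2 * x = e^2 * a^2 \<longleftrightarrow>
         (2 * x - (2 - e^2))^2 = e^2 * (e^2 - 4 + 4 * a^2)"
proof -
  have "(2 * x - (2 - e^2))^2 - e^2 * (e^2 - 4 + 4 * a^2) =
        4 * ((1 - x)^2 + e^2 * x - e^2 * a^2)"
    by (simp add: power2_eq_square algebra_simps)
  then show ?thesis by (smt (verit))
qed

lemma H0_discriminant_bounds:
  assumes "H0 e a"
  shows "0 < e * sqrt (e^2 - 4 + 4 * a^2) \<and> e * sqrt (e^2 - 4 + 4 * a^2) < 2 - e^2"
proof -
  define r where "r = sqrt (e^2 - 4 + 4 * a^2)"
  have e: "0 < e" "e < sqrt 2" and ea: "e * \<bar>a\<bar> < 1" and disc: "e^2 + 4 * a^2 > 4"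
    using assms by (auto simp: H0_def)
  have r: "r > 0" "r^2 = e^2 - 4 + 4 * a^2" using disc by (auto simp: r_def)
  have "e^2 < 2" using e by (metis abs_of_pos real_sqrt_abs real_sqrt_less_iff)
  have "(e * \<bar>a\<bar>)^2 < 1" using ea e by (simp add: abs_square_less_1)
  have "(e * r)^2 = e^2 * (e^2 - 4 + 4 * a^2)"
    using r by (simp add: power_mult_distrib)
  also have "\<dots> = (2 - e^2)^2 - 4 * (1 - (e * \<bar>a\<bar>)^2)"
    by (simp add: power_mult_distrib power2_eq_square algebra_simps)
  also have "\<dots> < (2 - e^2)^2"
    using \<open>(e * \<bar>a\<bar>)^2 < 1\<close> by simp
  finally have "(e * r)^2 < (2 - e^2)^2" .
  then have "e * r < 2 - e^2"
    using \<open>e^2 < 2\<close> by (simp add: power_less_imp_less_base)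
  with e r show ?thesis by (simp add: r_def)
qed

lemma omega_squares:
  assumes "H0 e a"
  shows "2 * (omega1 e a)^2 = 2 - e^2 + e * sqrt (e^2 - 4 + 4 * a^2)"
    and "2 * (omega2 e a)^2 = 2 - e^2 - e * sqrt (e^2 - 4 + 4 * a^2)"
proof -
  define r where "r = sqrt (e^2 - 4 + 4 * a^2)"
  have "0 < e * r" "e * r < 2 - e^2"
    using H0_discriminant_bounds[OF assms] by (auto simp: r_def)
  then have "0 \<le> 2 - e^2 + e * r" "0 \<le> 2 - e^2 - e * r" by auto
  then show "2 * (omega1 e a)^2 = 2 - e^2 + e * sqrt (e^2 - 4 + 4 * a^2)"
    and "2 * (omega2 e a)^2 = 2 - e^2 - e * sqrt (e^2 - 4 + 4 * a^2)"
    by (simp_all add: r_def omega1_def omega2_def power_mult_distrib power_divide)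
qed

lemma omega_order:
  assumes "H0 e a"
  shows "0 < omega2 e a \<and> omega2 e a < omega1 e a"
proof -
  define r where "r = sqrt (e^2 - 4 + 4 * a^2)"
  have "0 < e * r" "e * r < 2 - e^2"
    using H0_discriminant_bounds[OF assms] by (auto simp: r_def)
  then show ?thesis
    by (simp add: r_def omega1_def omega2_def divide_strict_right_mono)
qed

lemma omega_critical_frequency:
  assumes "H0 e a" and "w = omega1 e a \<or> w = omega2 e a"
  shows "(1 - w^2)^2 + e^2 * w^2 = e^2 * a^2 \<and> e^2 \<noteq> 2 * (1 - w^2)"
proof -
  define r where "r = sqrt (e^2 - 4 + 4 * a^2)"
  have "r^2 = e^2 - 4 + 4 * a^2" "0 < e * r"
    using assms(1) H0_discriminant_bounds[OF assms(1)] by (auto simp: r_def H0_def)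
  moreover have "2 * w^2 - (2 - e^2) = e * r \<or> 2 * w^2 - (2 - e^2) = - (e * r)"
    using assms(2) omega_squares[OF assms(1)] by (auto simp: r_def)
  ultimately have "(2 * w^2 - (2 - e^2))^2 = e^2 * (e^2 - 4 + 4 * a^2)"
    and "2 * w^2 - (2 - e^2) \<noteq> 0"
    by (auto simp: power_mult_distrib)
  then show ?thesis
    using frequency_equation_iff[of "w^2" e a] by (auto simp: algebra_simps)
qed

theorem lemma1:
  fixes a eps0 tau0 :: real and m n :: nat
  assumes "a \<noteq> 0"
    and "H0 eps0 a"
    and "tau_crit eps0 a (omega1 eps0 a) m = tau0"
    and "tau_crit eps0 a (omega2 eps0 a) n = tau0"
  shows "omega1 eps0 a > omega2 eps0 a \<and> omega2 eps0 a > 0 \<and>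
         simple_root (char_fun eps0 a tau0) (\<i> * of_real (omega1 eps0 a)) \<and>
         simple_root (char_fun eps0 a tau0) (- \<i> * of_real (omega1 eps0 a)) \<and>
         simple_root (char_fun eps0 a tau0) (\<i> * of_real (omega2 eps0 a)) \<and>
         simple_root (char_fun eps0 a tau0) (- \<i> * of_real (omega2 eps0 a))"
proof -
  have "eps0 \<noteq> 0" using assms(2) by (simp add: H0_def)
  have order: "0 < omega2 eps0 a \<and> omega2 eps0 a < omega1 eps0 a"
    using omega_order[OF assms(2)] .
  have roots: "simple_root (char_fun eps0 a (tau_crit eps0 a w k)) (\<i> * of_real w) \<and>
               simple_root (char_fun eps0 a (tau_crit eps0 a w k)) (- \<i> * of_real w)"
    if "w = omega1 eps0 a \<or> w = omega2 eps0 a" for w k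
  proof (rule critical_delay_simple_roots)
    show "0 < w" using that order by auto
  qed (use \<open>eps0 \<noteq> 0\<close> assms(1) omega_critical_frequency[OF assms(2) that] in auto)
  show ?thesis
    using order roots[of "omega1 eps0 a" m] roots[of "omega2 eps0 a" n] assms(3,4) by simp
qed

end
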